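(* Let $\mathbf{x}=(\mathbf{x}_1,\dots,\mathbf{x}_n)$ be a Generalized Nash equilibrium of the game $G^{(2)}$ and suppose $i\in\mathcal{T}_I(\mathbf{x})$ for some $i\in[n]$. Then $J_{\mathbf{x}_{-i}}=A(\mathbf{x}_{-i})$.
   Context: $G^{(2)}$ is a Fragile multi-CPR Game: $n,m\ge1$, $[k]=\{1,\dots,k\}$, $C_m=\{(x_1,\dots,x_m)\in[0,1]^m:\sum_j x_j\le1\}$, $\mathcal{C}_n=\prod_{i\in[n]}C_m$, $\mathcal{C}_{-i}=\prod_{[n]\setminus\{i\}}C_m$. A profile is $\mathbf{x}=(\mathbf{x}_1,\dots,\mathbf{x}_n)$, $\mathbf{x}_i=(x_{i1},\dots,x_{im})$; write $\mathbf{x}=(\mathbf{x}_i,\mathbf{x}_{-i})$; $\mathbf{x}_T^{(j)}=\sum_i x_{ij}$, $\mathbf{x}_T^{j|i}=\sum_{\ell\ne i}x_{\ell j}$. Each CPR $j$ has return rate $\mathcal{R}_j(t)>1$ and failure probability $p_j(t)\in[0,1]$; each player $i$ has parameters $a_i,k_i$. $\mathcal{F}_{ij}(t)=(\mathcal{R}_j(t)-1)^{a_i}(1-p_j(t))-k_ip_j(t)$; utility $\mathcal{V}_i(\mathbf{x}_i;\mathbf{x}_{-i})=\sum_j x_{ij}^{a_i}\mathcal{F}_{ij}(\mathbf{x}_T^{(j)})$. Assumption: (1) $p_j(0)=0$, $p_j(t)=1$ for $t\ge1$; (2) $a_i\in(0,1]$, $k_i>0$; (3) each $\mathcal{F}_{ij}$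 (continuous on $[0,1]$) has strictly negative first and second derivatives on $(0,1)$. $\omega_{ij}\in(0,1)$ is the unique zero of $\mathcal{F}_{ij}$ in $(0,1)$. $A(\mathbf{x}_{-i})=\{j:\mathbf{x}_T^{j|i}<\omega_{ij}\}$. $\vartheta_i(\mathbf{x}_{-i})=C_m\cap\big(\prod_{j\in A(\mathbf{x}_{-i})}[0,\omega_{ij}-\mathbf{x}_T^{j|i}]\times\prod_{j\notin A(\mathbf{x}_{-i})}\{0\}\big)$. A Generalized Nash equilibrium is $\mathbf{x}\in\mathcal{C}_n$ with, for all $i$, $\mathbf{x}_i\in\vartheta_i(\mathbf{x}_{-i})$ and $\mathcal{V}_i(\mathbf{x}_i;\mathbf{x}_{-i})\ge\mathcal{V}_i(\mathbf{y};\mathbf{x}_{-i})$ for all $\mathbf{y}\in\vartheta_i(\mathbf{x}_{-i})$. $\psi_{ij}(x;s)=x\,\mathcal{F}_{ij}'(x+s)+a_i\mathcal{F}_{ij}(x+s)$. For a GNE $\mathbf{x}$: $J_{\mathbf{x}_{-i}}=\{j\in A(\mathbf{x}_{-i}):x_{ij}\ne0\}$; $\mathbf{x}_i$ is of Type I if $\sum_{j\in J_{\mathbf{x}_{-i}}}x_{ij}<1$ and $\psi_{ij}(x_{ij};\mathbf{x}_T^{j|i})=0$ for all $j\in J_{\mathbf{x}_{-i}}$; of Type II if $\sum_{j\in J_{\mathbf{x}_{-i}}}x_{ij}=1$ and there is $\kappa_0\ge0$ with $x_{ij}^{a_i-1}\psi_{ij}(x_{ij};\mathbf{x}_T^{j|i})=\kappa_0$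 for all $j\in J_{\mathbf{x}_{-i}}$. $\mathcal{T}_I(\mathbf{x})=\{i\in[n]:\mathbf{x}_i\text{ is of Type I}\}$. *)

theory Defs
  imports "HOL-Analysis.Analysis"
begin

text \<open>Players are indexed by {1..n}, CPRs by {1..m}. A profile is x :: nat => nat => real,
  x i j being the investment of player i in CPR j. R j, p j are the return rate and failure
  probability of CPR j; a i, k i the parameters of player i.\<close>

definition FF :: "(nat \<Rightarrow> real \<Rightarrow> real) \<Rightarrow> (nat \<Rightarrow> real \<Rightarrow> real) \<Rightarrow> (nat \<Rightarrow> real) \<Rightarrow> (nat \<Rightarrow> real)
    \<Rightarrow> nat \<Rightarrow> nat \<Rightarrow> real \<Rightarrow> real" where
  "FF R p a k i j t = (R j t - 1) powr (a i) * (1 - p j t) - k i * p j t"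

definition omega :: "(nat \<Rightarrow> real \<Rightarrow> real) \<Rightarrow> (nat \<Rightarrow> real \<Rightarrow> real) \<Rightarrow> (nat \<Rightarrow> real) \<Rightarrow> (nat \<Rightarrow> real)
    \<Rightarrow> nat \<Rightarrow> nat \<Rightarrow> real" where
  "omega R p a k i j = (THE w. 0 < w \<and> w < 1 \<and> FF R p a k i j w = 0)"

definition fragile_game :: "nat \<Rightarrow> nat \<Rightarrow> (nat \<Rightarrow> real \<Rightarrow> real) \<Rightarrow> (nat \<Rightarrow> real \<Rightarrow> real)
    \<Rightarrow> (nat \<Rightarrow> real) \<Rightarrow> (nat \<Rightarrow> real) \<Rightarrow> bool" where
  "fragile_game n m R p a k \<longleftrightarrow>
     1 \<le> n \<and> 1 \<le> m \<and>
     (\<forall>j\<in>{1..m}. \<forall>t. R j t > 1 \<and> 0 \<le> p j t \<and> p j t \<le> 1) \<and>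
     (\<forall>j\<in>{1..m}. p j 0 = 0 \<and> (\<forall>t\<ge>1. p j t = 1)) \<and>
     (\<forall>i\<in>{1..n}. 0 < a i \<and> a i \<le> 1 \<and> 0 < k i) \<and>
     (\<forall>i\<in>{1..n}. \<forall>j\<in>{1..m}.
        continuous_on {0..1} (FF R p a k i j) \<and>
        (\<forall>t\<in>{0<..<1}.
           (FF R p a k i j has_real_derivative deriv (FF R p a k i j) t) (at t) \<and>
           (deriv (FF R p a k i j) has_real_derivative deriv (deriv (FF R p a k i j)) t) (at t) \<and>
           deriv (FF R p a k i j) t < 0 \<and> deriv (deriv (FF R p a k i j)) t < 0))"

definition in_Cm :: "nat \<Rightarrow> (nat \<Rightarrow> real) \<Rightarrow> bool" where
  "in_Cm m y \<longleftrightarrow> (\<forall>j\<in>{1..m}. 0 \<le> y j \<and> y j \<le> 1) \<and> (\<Sum>j=1..m. y j) \<le> 1"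

definition in_Cn :: "nat \<Rightarrow> nat \<Rightarrow> (nat \<Rightarrow> nat \<Rightarrow> real) \<Rightarrow> bool" where
  "in_Cn n m x \<longleftrightarrow> (\<forall>i\<in>{1..n}. in_Cm m (x i))"

definition others :: "nat \<Rightarrow> (nat \<Rightarrow> nat \<Rightarrow> real) \<Rightarrow> nat \<Rightarrow> nat \<Rightarrow> real" where
  "others n x i j = (\<Sum>l\<in>{1..n} - {i}. x l j)"

definition Aset where
  "Aset n m R p a k x i = {j\<in>{1..m}. others n x i j < omega R p a k i j}"

definition theta where
  "theta n m R p a k x i = {y. in_Cm m y \<and>
     (\<forall>j\<in>{1..m}. if j \<in> Aset n m R p a k x i
                   then 0 \<le> y j \<and> y j \<le> omega R p a k i j - others n x i j
                   else y j = 0)}"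

definition utility where
  "utility n m R p a k x i y = (\<Sum>j=1..m. y j powr a i * FF R p a k i j (y j + others n x i j))"

definition is_GNE where
  "is_GNE n m R p a k x \<longleftrightarrow> in_Cn n m x \<and>
     (\<forall>i\<in>{1..n}. x i \<in> theta n m R p a k x i \<and>
        (\<forall>y\<in>theta n m R p a k x i. utility n m R p a k x i (x i) \<ge> utility n m R p a k x i y))"

definition psi where
  "psi R p a k i j x s = x * deriv (FF R p a k i j) (x + s) + a i * FF R p a k i j (x + s)"

definition Jset where
  "Jset n m R p a k x i = {j\<in>Aset n m R p a k x i. x i j \<noteq> 0}"

definition typeI where
  "typeI n m R p a k x i \<longleftrightarrow>
     (\<Sum>j\<in>Jset n m R p a k x i. x i j) < 1 \<and>
     (\<forall>j\<in>Jset n m R p a k x i. psi R p a k i j (x i j) (others n x i j) = 0)"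

definition T_I where
  "T_I n m R p a k x = {i\<in>{1..n}. typeI n m R p a k x i}"

end

theory Submission
  imports Defs
begin

text \<open>At an equilibrium, a player with unspent budget cannot leave an available CPR j untouched:
  F_ij is positive below its root \<omega>_ij, so moving a small amount \<epsilon> of the unspent budget into j
  stays feasible and adds \<epsilon>^a_i * F_ij(\<epsilon> + x_T^{j|i}) > 0 to the utility. A Type I player
  invests nothing outside J and less than 1 on J, so no such j exists.\<close>

lemma fragile_game_FF_strict_decreasing:
  assumes "fragile_game n m R p a k" "i \<in> {1..n}" "j \<in> {1..m}"
    and "0 \<le> u" "u < v" "v \<le> 1"
  shows "FF R p a k i j v < FF R p a k i j u"
proof (rule DERIV_neg_imp_decreasing_open[OF \<open>u < v\<close>])
  have "continuous_on {0..1} (FF R p a k i j)"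
    using assms(1-3) unfolding fragile_game_def by blast
  then show "continuous_on {u..v} (FF R p a k i j)"
    by (rule continuous_on_subset) (use assms in auto)
next
  fix t assume "u < t" "t < v"
  then have "t \<in> {0<..<1}" using assms by auto
  with assms(1-3) show "\<exists>D. (FF R p a k i j has_real_derivative D) (at t) \<and> D < 0"
    unfolding fragile_game_def by blast
qed

lemma fragile_game_FF_0_pos:
  assumes "fragile_game n m R p a k" "j \<in> {1..m}"
  shows "FF R p a k i j 0 > 0"
proof -
  have "R j 0 > 1" "p j 0 = 0" using assms unfolding fragile_game_def by auto
  then show ?thesis by (simp add: FF_def)
qed

lemma fragile_game_FF_1_neg:
  assumes "fragile_game n m R p a k" "i \<in> {1..n}" "j \<in> {1..m}"
  shows "FF R p a k i j 1 < 0"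
proof -
  have "k i > 0" "p j 1 = 1" using assms unfolding fragile_game_def by auto
  then show ?thesis by (simp add: FF_def)
qed

lemma omega_root:
  assumes "fragile_game n m R p a k" "i \<in> {1..n}" "j \<in> {1..m}"
  shows "0 < omega R p a k i j \<and> omega R p a k i j < 1 \<and> FF R p a k i j (omega R p a k i j) = 0"
proof -
  let ?F = "FF R p a k i j"
  have F0: "?F 0 > 0" and F1: "?F 1 < 0"
    using fragile_game_FF_0_pos fragile_game_FF_1_neg assms by blast+
  have "continuous_on {0..1} ?F" using assms unfolding fragile_game_def by blast
  then obtain w where "0 \<le> w" "w \<le> 1" "?F w = 0"
    using IVT2'[of ?F 1 0 0] F0 F1 by auto
  with F0 F1 have w: "0 < w \<and> w < 1 \<and> ?F w = 0"
    by (metis less_eq_real_def less_irrefl)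
  have "w' = w" if w': "0 < w' \<and> w' < 1 \<and> ?F w' = 0" for w'
    using fragile_game_FF_strict_decreasing[OF assms, of w w']
      fragile_game_FF_strict_decreasing[OF assms, of w' w] w w'
    by (metis less_eq_real_def linorder_neqE_linordered_idom less_irrefl)
  then have "omega R p a k i j = w"
    unfolding omega_def using w by (intro the_equality) blast+
  with w show ?thesis by simp
qed

lemma FF_pos_below_omega:
  assumes "fragile_game n m R p a k" "i \<in> {1..n}" "j \<in> {1..m}"
    and "0 \<le> t" "t < omega R p a k i j"
  shows "FF R p a k i j t > 0"
  using fragile_game_FF_strict_decreasing[OF assms(1-3) assms(4,5)] omega_root[OF assms(1-3)]
  by simp

lemma others_nonneg:
  assumes "in_Cn n m x" "j \<in> {1..m}"
  shows "0 \<le> others n x i j"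
  unfolding others_def using assms by (intro sum_nonneg) (auto simp: in_Cn_def in_Cm_def)

lemma sum_theta_eq_sum_Jset:
  assumes "x i \<in> theta n m R p a k x i"
  shows "(\<Sum>l=1..m. x i l) = (\<Sum>l\<in>Jset n m R p a k x i. x i l)"
proof (rule sum.mono_neutral_right)
  show "\<forall>l\<in>{1..m} - Jset n m R p a k x i. x i l = 0"
    using assms unfolding theta_def Jset_def by (auto split: if_splits)
qed (auto simp: Jset_def Aset_def)

lemma utility_fun_upd_zero:
  assumes "y j = 0" "j \<in> {1..m}"
  shows "utility n m R p a k x i (y(j := e))
    = utility n m R p a k x i y + e powr a i * FF R p a k i j (e + others n x i j)"
proof -
  have "utility n m R p a k x i (y(j := e))
      = (\<Sum>l=1..m. y l powr a i * FF R p a k i l (y l + others n x i l)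
          + (if l = j then e powr a i * FF R p a k i j (e + others n x i j) else 0))"
    unfolding utility_def using assms(1) by (intro sum.cong) auto
  then show ?thesis
    using assms(2) by (simp add: sum.distrib utility_def)
qed

lemma theta_fun_upd_zero:
  assumes "y \<in> theta n m R p a k x i" "j \<in> Aset n m R p a k x i" "y j = 0"
    and "0 \<le> e" "e \<le> omega R p a k i j - others n x i j" "(\<Sum>l=1..m. y l) + e \<le> 1"
  shows "y(j := e) \<in> theta n m R p a k x i"
proof -
  have j: "j \<in> {1..m}" using assms(2) unfolding Aset_def by simp
  have y: "in_Cm m y" using assms(1) unfolding theta_def by simp
  then have "0 \<le> (\<Sum>l=1..m. y l)" unfolding in_Cm_def by (intro sum_nonneg) auto
  then have "e \<le> 1" using assms(6) by linarith
  moreover have "(\<Sum>l=1..m. (y(j := e)) l) = (\<Sum>l=1..m. y l) + e"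
    using j assms(3) by (simp add: sum.remove[of _ j])
  ultimately have "in_Cm m (y(j := e))"
    using y assms(4,6) unfolding in_Cm_def by auto
  then show ?thesis
    using assms(1-5) unfolding theta_def by auto
qed

lemma GNE_untapped_available_CPR_imp_budget_spent:
  assumes g: "fragile_game n m R p a k" and gne: "is_GNE n m R p a k x" and i: "i \<in> {1..n}"
    and jA: "j \<in> Aset n m R p a k x i" and x0: "x i j = 0"
  shows "(\<Sum>l=1..m. x i l) = 1"
proof (rule ccontr)
  let ?s = "others n x i j" and ?w = "omega R p a k i j"
  have j: "j \<in> {1..m}" and sw: "?s < ?w" using jA unfolding Aset_def by auto
  have Cn: "in_Cn n m x" and xth: "x i \<in> theta n m R p a k x i"
    and opt: "\<And>y. y \<in> theta n m R p a k x i
      \<Longrightarrow> utility n m R p a k x i y \<le> utility n m R p a k x i (x i)"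
    using gne i unfolding is_GNE_def by blast+
  have "(\<Sum>l=1..m. x i l) \<le> 1" using Cn i unfolding in_Cn_def in_Cm_def by blast
  moreover assume "(\<Sum>l=1..m. x i l) \<noteq> 1"
  ultimately have slack: "(\<Sum>l=1..m. x i l) < 1" by linarith
  define e where "e = min ((?w - ?s) / 2) (1 - (\<Sum>l=1..m. x i l))"
  have e: "0 < e" "e + ?s < ?w" "(\<Sum>l=1..m. x i l) + e \<le> 1"
    using sw slack unfolding e_def by (auto simp: field_simps min_def)
  have "(x i)(j := e) \<in> theta n m R p a k x i"
    using e by (intro theta_fun_upd_zero[OF xth jA x0]) auto
  then have "utility n m R p a k x i ((x i)(j := e)) \<le> utility n m R p a k x i (x i)"
    by (rule opt)
  moreover have "FF R p a k i j (e + ?s) > 0"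
    using FF_pos_below_omega[OF g i j] others_nonneg[OF Cn j] e by simp
  then have "e powr a i * FF R p a k i j (e + ?s) > 0"
    using e(1) by simp
  ultimately show False
    using utility_fun_upd_zero[of "x i", OF x0 j] by simp
qed

theorem lemma5:
  fixes n m :: nat and R p :: "nat \<Rightarrow> real \<Rightarrow> real" and a k :: "nat \<Rightarrow> real"
    and x :: "nat \<Rightarrow> nat \<Rightarrow> real" and i :: nat
  assumes "fragile_game n m R p a k"
    and "is_GNE n m R p a k x"
    and "i \<in> {1..n}"
    and "i \<in> T_I n m R p a k x"
  shows "Jset n m R p a k x i = Aset n m R p a k x i"
proof
  show "Jset n m R p a k x i \<subseteq> Aset n m R p a k x i" unfolding Jset_def by auto
next
  show "Aset n m R p a k x i \<subseteq> Jset n m R p a k x i"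
  proof
    fix j assume jA: "j \<in> Aset n m R p a k x i"
    have "x i \<in> theta n m R p a k x i" using assms(2,3) unfolding is_GNE_def by blast
    then have "(\<Sum>l=1..m. x i l) < 1"
      using assms(4) sum_theta_eq_sum_Jset unfolding T_I_def typeI_def by fastforce
    then have "x i j \<noteq> 0"
      using GNE_untapped_available_CPR_imp_budget_spent[OF assms(1-3) jA] by auto
    with jA show "j \<in> Jset n m R p a k x i" unfolding Jset_def by simp
  qed
qed

end
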